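(* Let $n,g$ be integers with $1\leq g\leq \lfloor \frac{n-3}{2}\rfloor$, and let $T$ be a tree of order $n$ of type $T_n^*$ (with respect to $g$). Then $T$ has an $R_g$-cutset and $$\kappa_g(T)=n-2g-2.$$
   Context: All graphs are finite and simple. A tree $T$ of order $n$ is of type $T_n^*$ (with respect to $g$) if it contains a vertex $v$ such that $T-v$ has two connected components with exactly $g+1$ vertices each, and every other connected component of $T-v$ (there may be none) has at most $g$ vertices. Equivalently, $T$ is obtained from two trees $T',T''$ of order $g+1$ and trees $T_1,\ldots,T_r$ ($r\ge 0$) each of order at most $g$ with $\sum_i|V(T_i)|=n-2g-3$, by adding a new vertex $v$ and one edge from $v$ to each of $T',T'',T_1,\ldots,T_r$. A set $S\subseteq V(G)$ is a cutset if $G-S$ is disconnected. For a non-negative integer $g$, a cutset $S$ is an $R_g$-cutset if every connected component of $G-S$ has at least $g+1$ vertices. If $G$ has at least one $R_g$-cutset, the $g$-extra connectivity $\kappa_g(G)$ is the minimum cardinality of an $R_g$-cutset of $G$. *)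

theory Defs
  imports Main
begin

definition graph :: "'a set \<Rightarrow> 'a set set \<Rightarrow> bool" where
  "graph V E \<longleftrightarrow> finite V \<and> (\<forall>e\<in>E. e \<subseteq> V \<and> card e = 2)"

definition reachable :: "'a set \<Rightarrow> 'a set set \<Rightarrow> 'a \<Rightarrow> 'a \<Rightarrow> bool" where
  "reachable V E u v \<longleftrightarrow> u \<in> V \<and> v \<in> V \<and>
     (\<lambda>x y. x \<in> V \<and> y \<in> V \<and> {x, y} \<in> E)\<^sup>*\<^sup>* u v"

definition connected :: "'a set \<Rightarrow> 'a set set \<Rightarrow> bool" where
  "connected V E \<longleftrightarrow> V \<noteq> {} \<and> (\<forall>u\<in>V. \<forall>v\<in>V. reachable V E u v)"

definition is_cycle :: "'a set \<Rightarrow> 'a set set \<Rightarrow> 'a list \<Rightarrow> bool" where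
  "is_cycle V E vs \<longleftrightarrow> length vs \<ge> 3 \<and> distinct vs \<and> set vs \<subseteq> V \<and>
     (\<forall>i < length vs. {vs ! i, vs ! ((i + 1) mod length vs)} \<in> E)"

definition acyclic_graph :: "'a set \<Rightarrow> 'a set set \<Rightarrow> bool" where
  "acyclic_graph V E \<longleftrightarrow> \<not> (\<exists>vs. is_cycle V E vs)"

definition tree :: "'a set \<Rightarrow> 'a set set \<Rightarrow> bool" where
  "tree V E \<longleftrightarrow> graph V E \<and> connected V E \<and> acyclic_graph V E"

definition del_verts :: "'a set \<Rightarrow> 'a set set \<Rightarrow> 'a set \<Rightarrow> 'a set \<times> 'a set set" where
  "del_verts V E S = (V - S, {e \<in> E. e \<inter> S = {}})"

definition components :: "'a set \<Rightarrow> 'a set set \<Rightarrow> 'a set set" where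
  "components V E = {C. \<exists>v\<in>V. C = {u. reachable V E v u}}"

definition cutset :: "'a set \<Rightarrow> 'a set set \<Rightarrow> 'a set \<Rightarrow> bool" where
  "cutset V E S \<longleftrightarrow> S \<subseteq> V \<and>
     (let (V', E') = del_verts V E S in \<not> connected V' E' \<and> V' \<noteq> {})"

definition Rg_cutset :: "nat \<Rightarrow> 'a set \<Rightarrow> 'a set set \<Rightarrow> 'a set \<Rightarrow> bool" where
  "Rg_cutset g V E S \<longleftrightarrow> cutset V E S \<and>
     (let (V', E') = del_verts V E S in \<forall>C\<in>components V' E'. card C \<ge> g + 1)"

definition extra_conn :: "nat \<Rightarrow> 'a set \<Rightarrow> 'a set set \<Rightarrow> nat" where
  "extra_conn g V E = (LEAST k. \<exists>S. Rg_cutset g V E S \<and> card S = k)"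

definition type_Tstar :: "nat \<Rightarrow> 'a set \<Rightarrow> 'a set set \<Rightarrow> bool" where
  "type_Tstar g V E \<longleftrightarrow> tree V E \<and> (\<exists>v\<in>V.
     (let (V', E') = del_verts V E {v} in
       \<exists>C1 C2. C1 \<in> components V' E' \<and> C2 \<in> components V' E' \<and> C1 \<noteq> C2 \<and>
         card C1 = g + 1 \<and> card C2 = g + 1 \<and>
         (\<forall>C \<in> components V' E' - {C1, C2}. card C \<le> g)))"

end

theory Submission
  imports Defs
begin

text \<open>Let \<open>v\<close> be the vertex of the definition of type \<open>T\<^sub>n\<^sup>*\<close> and \<open>C\<^sub>1, C\<^sub>2\<close> the two
  branches of \<open>T - v\<close> of order \<open>g + 1\<close>. Deleting everything outside \<open>C\<^sub>1 \<union> C\<^sub>2\<close> leaves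
  exactly these two branches, an \<open>R\<^sub>g\<close>-cutset of size \<open>n - 2g - 2\<close>. Conversely, let \<open>S\<close>
  be any \<open>R\<^sub>g\<close>-cutset. A component of \<open>T - S\<close> avoiding \<open>v\<close> lies inside a branch of
  \<open>T - v\<close>; having at least \<open>g + 1\<close> vertices it must be all of \<open>C\<^sub>1\<close> or \<open>C\<^sub>2\<close>. If \<open>v \<notin> S\<close>,
  such a component exists because \<open>T - S\<close> is disconnected, and it contains a neighbour
  of \<open>v\<close>, a contradiction. So \<open>v \<in> S\<close>, every component of \<open>T - S\<close> is \<open>C\<^sub>1\<close> or \<open>C\<^sub>2\<close>, and
  \<open>|S| \<ge> n - 2g - 2\<close>.\<close>

lemma reachable_refl: "u \<in> V \<Longrightarrow> reachable V E u u"
  by (simp add: reachable_def)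

lemma reachable_step: "reachable V E u x \<Longrightarrow> y \<in> V \<Longrightarrow> {x, y} \<in> E \<Longrightarrow> reachable V E u y"
  unfolding reachable_def by (auto intro: rtranclp.rtrancl_into_rtrancl)

lemma reachable_trans: "reachable V E u x \<Longrightarrow> reachable V E x w \<Longrightarrow> reachable V E u w"
  unfolding reachable_def by (auto intro: rtranclp_trans)

lemma reachable_sym:
  assumes "reachable V E u w"
  shows "reachable V E w u"
proof -
  have "(\<lambda>x y. x \<in> V \<and> y \<in> V \<and> {x, y} \<in> E)\<^sup>*\<^sup>* u w"
    using assms by (simp add: reachable_def)
  then show ?thesis
  proof (induction rule: rtranclp_induct)
    case base
    then show ?case using assms by (simp add: reachable_def)
  next
    case (step x y)
    then have "{y, x} \<in> E" by (simp add: insert_commute)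
    then have "reachable V E y x"
      using step unfolding reachable_def by (blast intro: r_into_rtranclp)
    then show ?case using step.IH by (rule reachable_trans)
  qed
qed

lemma reachable_mono:
  assumes "U \<subseteq> W" and "reachable U E u w"
  shows "reachable W E u w"
proof -
  have le: "(\<lambda>x y. x \<in> U \<and> y \<in> U \<and> {x, y} \<in> E) \<le> (\<lambda>x y. x \<in> W \<and> y \<in> W \<and> {x, y} \<in> E)"
    using assms(1) by auto
  have "(\<lambda>x y. x \<in> U \<and> y \<in> U \<and> {x, y} \<in> E)\<^sup>*\<^sup>* u w"
    using assms(2) unfolding reachable_def by blast
  then have "(\<lambda>x y. x \<in> W \<and> y \<in> W \<and> {x, y} \<in> E)\<^sup>*\<^sup>* u w"
    by (rule rtranclp_mono[THEN predicate2D, OF le])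
  then show ?thesis
    using assms unfolding reachable_def by blast
qed

lemma reachable_closed:
  assumes "reachable V E u w" and "u \<in> C"
    and closed: "\<And>x y. x \<in> C \<Longrightarrow> y \<in> V \<Longrightarrow> {x, y} \<in> E \<Longrightarrow> y \<in> C"
  shows "w \<in> C"
proof -
  have "(\<lambda>x y. x \<in> V \<and> y \<in> V \<and> {x, y} \<in> E)\<^sup>*\<^sup>* u w"
    using assms(1) by (simp add: reachable_def)
  then show ?thesis
  proof (induction rule: rtranclp_induct)
    case base
    show ?case by (fact \<open>u \<in> C\<close>)
  next
    case (step x y)
    then show ?case using closed[OF step.IH] by blast
  qed
qed

lemma reachable_restrict:
  assumes "U \<subseteq> W" and "{w. reachable W E u w} \<subseteq> U"
  shows "reachable U E u w \<longleftrightarrow> reachable W E u w"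
proof
  assume "reachable W E u w"
  then have "w \<in> {w. reachable U E u w}"
  proof (rule reachable_closed)
    have "u \<in> W"
      using \<open>reachable W E u w\<close> by (simp add: reachable_def)
    then have "u \<in> U"
      using assms(2) reachable_refl[of u W E] by blast
    then show "u \<in> {w. reachable U E u w}"
      using reachable_refl[of u U E] by simp
  next
    fix x y assume "x \<in> {w. reachable U E u w}" and "y \<in> W" and xy: "{x, y} \<in> E"
    then have ux: "reachable U E u x" by simp
    then have "reachable W E u y"
      by (rule reachable_step[OF reachable_mono[OF assms(1)] \<open>y \<in> W\<close> xy])
    then have "y \<in> U" using assms(2) by blast
    then show "y \<in> {w. reachable U E u w}"
      using reachable_step[OF ux _ xy] by simp
  qed
  then show "reachable U E u w" by simp
qed (rule reachable_mono[OF assms(1)])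

lemma reachable_del_verts: "U \<inter> S = {} \<Longrightarrow> reachable U {e \<in> E. e \<inter> S = {}} = reachable U E"
proof -
  assume "U \<inter> S = {}"
  then have same_edges: "(\<lambda>x y. x \<in> U \<and> y \<in> U \<and> {x, y} \<in> {e \<in> E. e \<inter> S = {}}) =
      (\<lambda>x y. x \<in> U \<and> y \<in> U \<and> {x, y} \<in> E)"
    by (intro ext) auto
  show ?thesis
    unfolding reachable_def same_edges ..
qed

lemma components_del_verts: "U \<inter> S = {} \<Longrightarrow> components U {e \<in> E. e \<inter> S = {}} = components U E"
  by (simp add: components_def reachable_del_verts)

lemma connected_del_verts: "U \<inter> S = {} \<Longrightarrow> connected U {e \<in> E. e \<inter> S = {}} = connected U E"
  by (simp add: connected_def reachable_del_verts)

lemma Rg_cutset_iff: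
  "Rg_cutset g V E S \<longleftrightarrow> S \<subseteq> V \<and> V - S \<noteq> {} \<and> \<not> connected (V - S) E \<and>
     (\<forall>C \<in> components (V - S) E. g + 1 \<le> card C)"
proof -
  have "(V - S) \<inter> S = {}" by blast
  then show ?thesis
    by (auto simp: Rg_cutset_def cutset_def del_verts_def components_del_verts connected_del_verts)
qed

lemma component_of_in_components: "u \<in> V \<Longrightarrow> {w. reachable V E u w} \<in> components V E"
  by (auto simp: components_def)

lemma component_eq:
  assumes "C \<in> components V E" and "u \<in> C"
  shows "C = {w. reachable V E u w}"
proof -
  obtain x where C: "C = {w. reachable V E x w}"
    using assms(1) by (auto simp: components_def)
  then have xu: "reachable V E x u" using assms(2) by simp
  show ?thesis
  proof (intro equalityI subsetI)
    fix w assume "w \<in> C"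
    then show "w \<in> {w. reachable V E u w}"
      using reachable_trans[OF reachable_sym[OF xu]] C by simp
  next
    fix w assume "w \<in> {w. reachable V E u w}"
    then show "w \<in> C"
      using reachable_trans[OF xu] C by simp
  qed
qed

lemma component_subset: "C \<in> components V E \<Longrightarrow> C \<subseteq> V"
  by (auto simp: components_def reachable_def)

lemma component_nonempty: "C \<in> components V E \<Longrightarrow> C \<noteq> {}"
  by (auto simp: components_def intro: reachable_refl)

lemma components_disjoint:
  "C1 \<in> components V E \<Longrightarrow> C2 \<in> components V E \<Longrightarrow> C1 \<noteq> C2 \<Longrightarrow> C1 \<inter> C2 = {}"
  by (metis component_eq disjoint_iff)

lemma component_closed:
  "C \<in> components V E \<Longrightarrow> x \<in> C \<Longrightarrow> y \<in> V \<Longrightarrow> {x, y} \<in> E \<Longrightarrow> y \<in> C"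
  by (metis component_eq mem_Collect_eq reachable_step)

lemma components_Union:
  assumes "\<C> \<subseteq> components W E"
  shows "components (\<Union>\<C>) E = \<C>"
proof -
  have "\<Union>\<C> \<subseteq> W"
    using assms component_subset by blast
  have C: "{w. reachable (\<Union>\<C>) E u w} = C" if "C \<in> \<C>" and "u \<in> C" for C u
  proof -
    have C_eq: "C = {w. reachable W E u w}"
      using component_eq[of C W E u] assms that by blast
    then have "{w. reachable W E u w} \<subseteq> \<Union>\<C>"
      using that(1) by blast
    then show ?thesis
      using reachable_restrict[OF \<open>\<Union>\<C> \<subseteq> W\<close>] C_eq by simp
  qed
  show ?thesis
  proof (intro equalityI subsetI)
    fix D assume "D \<in> components (\<Union>\<C>) E"
    then obtain u C where "C \<in> \<C>" "u \<in> C" "D = {w. reachable (\<Union>\<C>) E u w}"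
      by (auto simp: components_def)
    then show "D \<in> \<C>" using C by simp
  next
    fix D assume "D \<in> \<C>"
    then obtain u where "u \<in> D"
      using assms component_nonempty by blast
    then have "{w. reachable (\<Union>\<C>) E u w} \<in> components (\<Union>\<C>) E"
      using \<open>D \<in> \<C>\<close> by (intro component_of_in_components) blast
    then show "D \<in> components (\<Union>\<C>) E"
      using C[OF \<open>D \<in> \<C>\<close> \<open>u \<in> D\<close>] by simp
  qed
qed

lemma not_connected_if_distinct_components:
  assumes "C1 \<in> components V E" "C2 \<in> components V E" "C1 \<noteq> C2"
  shows "\<not> connected V E"
proof
  assume conn: "connected V E"
  have "C = V" if C: "C \<in> components V E" for C
  proof -
    obtain x where "x \<in> V" "C = {w. reachable V E x w}"
      using C unfolding components_def by blast
    then show ?thesis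
      using conn component_subset[OF C] by (auto simp: connected_def)
  qed
  then show False using assms by metis
qed

lemma component_adjacent:
  assumes "connected V E" and "v \<in> V" and C: "C \<in> components (V - {v}) E"
  shows "\<exists>c\<in>C. {c, v} \<in> E"
proof (rule ccontr)
  assume no_edge: "\<not> (\<exists>c\<in>C. {c, v} \<in> E)"
  obtain u where "u \<in> C" using component_nonempty[OF C] by blast
  then have "reachable V E u v"
    using assms(1,2) component_subset[OF C] by (auto simp: connected_def)
  then have "v \<in> C"
  proof (rule reachable_closed)
    fix x y assume "x \<in> C" "y \<in> V" "{x, y} \<in> E"
    moreover from this have "y \<noteq> v" using no_edge by blast
    ultimately show "y \<in> C" using component_closed[OF C] by blast
  qed (fact \<open>u \<in> C\<close>)
  then show False using component_subset[OF C] by blast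
qed

lemma reachable_avoiding_vertex:
  assumes "\<not> reachable (V - S) E w v" and "reachable (V - S) E w x"
  shows "reachable (V - {v}) E w x"
proof -
  have "{y. reachable (V - S) E w y} \<subseteq> V - S - {v}"
    using assms(1) by (auto simp: reachable_def)
  then have "reachable (V - S - {v}) E w x"
    using reachable_restrict[of "V - S - {v}" "V - S" E w x] assms(2) by simp
  then show ?thesis
    by (rule reachable_mono[rotated]) blast
qed

locale heavy_branches =
  fixes g :: nat and V :: "'a set" and E :: "'a set set" and v :: 'a and C1 C2 :: "'a set"
  assumes finite_V: "finite V" and connected: "connected V E" and centre: "v \<in> V"
    and branches: "C1 \<in> components (V - {v}) E" "C2 \<in> components (V - {v}) E" "C1 \<noteq> C2"
    and card_branches: "card C1 = g + 1" "card C2 = g + 1"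
    and small_branches: "\<And>C. C \<in> components (V - {v}) E \<Longrightarrow> C \<notin> {C1, C2} \<Longrightarrow> card C \<le> g"
begin

lemma branches_subset: "C1 \<union> C2 \<subseteq> V - {v}"
  using branches component_subset by blast

lemma finite_branches: "finite C1" "finite C2"
  using branches_subset finite_V by (auto intro: finite_subset)

lemma card_Un_branches: "card (C1 \<union> C2) = 2 * g + 2"
  using card_Un_disjoint[OF finite_branches components_disjoint[OF branches]] card_branches
  by simp

lemma Rg_cutset_complement: "Rg_cutset g V E (V - (C1 \<union> C2))"
proof -
  have comps: "components (C1 \<union> C2) E = {C1, C2}"
    using components_Union[of "{C1, C2}"] branches by auto
  then have "\<not> connected (C1 \<union> C2) E"
    using not_connected_if_distinct_components[of C1 _ E C2] branches(3) by simp
  moreover have "V - (V - (C1 \<union> C2)) = C1 \<union> C2"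
    using branches_subset by blast
  ultimately show ?thesis
    unfolding Rg_cutset_iff using comps card_branches component_nonempty[OF branches(1)] by auto
qed

lemma heavy_component_is_branch:
  assumes w: "w \<in> V - S" and "\<not> reachable (V - S) E w v"
    and heavy: "g + 1 \<le> card {x. reachable (V - S) E w x}"
  shows "{x. reachable (V - S) E w x} \<in> {C1, C2}"
proof -
  define D where "D = {x. reachable (V - S) E w x}"
  define B where "B = {x. reachable (V - {v}) E w x}"
  have "D \<subseteq> B"
    using reachable_avoiding_vertex[OF assms(2)] by (auto simp: D_def B_def)
  have "w \<noteq> v"
  proof
    assume "w = v"
    then show False using assms(2) reachable_refl[OF w] by simp
  qed
  then have "w \<in> V - {v}" using w by blast
  then have B: "B \<in> components (V - {v}) E"
    unfolding B_def by (rule component_of_in_components)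
  then have "finite B"
    using finite_subset[OF component_subset[OF B]] finite_V by simp
  have "card D \<le> card B"
    using card_mono[OF \<open>finite B\<close> \<open>D \<subseteq> B\<close>] .
  have "B \<in> {C1, C2}"
  proof (rule ccontr)
    assume "B \<notin> {C1, C2}"
    with small_branches[OF B] have "card B \<le> g" .
    with heavy \<open>card D \<le> card B\<close> show False unfolding D_def by linarith
  qed
  then have "card B = card D"
    using card_branches heavy \<open>card D \<le> card B\<close> unfolding D_def by auto
  then have "D = B"
    using card_subset_eq[OF \<open>finite B\<close> \<open>D \<subseteq> B\<close>] by simp
  then show ?thesis
    using \<open>B \<in> {C1, C2}\<close> by (simp add: D_def)
qed

lemma Rg_cutset_contains_centre:
  assumes cut: "Rg_cutset g V E S"
  shows "v \<in> S"
proof (rule ccontr)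
  assume "v \<notin> S"
  then have v: "v \<in> V - S" using centre by blast
  obtain a b where a: "a \<in> V - S" and b: "b \<in> V - S" and "\<not> reachable (V - S) E a b"
    using cut unfolding Rg_cutset_iff connected_def by blast
  moreover have "reachable (V - S) E a b"
    if "reachable (V - S) E a v" and "reachable (V - S) E b v"
    using reachable_trans[OF that(1) reachable_sym[OF that(2)]] .
  ultimately obtain w where w: "w \<in> V - S" and not_wv: "\<not> reachable (V - S) E w v"
    by blast
  let ?D = "{x. reachable (V - S) E w x}"
  have "?D \<in> components (V - S) E"
    using w by (rule component_of_in_components)
  then have "g + 1 \<le> card ?D"
    using cut by (simp add: Rg_cutset_iff)
  then have "?D \<in> {C1, C2}"
    using heavy_component_is_branch[OF w] not_wv by simp
  then obtain c where "c \<in> ?D" and "{c, v} \<in> E"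
    using component_adjacent[OF connected centre] branches by blast
  then have "reachable (V - S) E w v"
    using reachable_step[of "V - S" E w c v] v by simp
  with not_wv show False ..
qed

lemma Rg_cutset_remainder:
  assumes cut: "Rg_cutset g V E S"
  shows "V - S \<subseteq> C1 \<union> C2"
proof
  fix w assume w: "w \<in> V - S"
  let ?D = "{x. reachable (V - S) E w x}"
  have "\<not> reachable (V - S) E w v"
    using Rg_cutset_contains_centre[OF cut] by (simp add: reachable_def)
  moreover have "g + 1 \<le> card ?D"
    using cut component_of_in_components[OF w] by (simp add: Rg_cutset_iff)
  ultimately have "?D \<in> {C1, C2}"
    using heavy_component_is_branch[OF w] by simp
  moreover have "w \<in> ?D"
    using reachable_refl[OF w] by simp
  ultimately show "w \<in> C1 \<union> C2" by blast
qed

lemma card_Rg_cutset: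
  assumes cut: "Rg_cutset g V E S"
  shows "card V - 2 * g - 2 \<le> card S"
proof -
  have "S \<subseteq> V" using cut by (simp add: Rg_cutset_iff)
  have "card (V - S) \<le> card (C1 \<union> C2)"
    using card_mono[OF _ Rg_cutset_remainder[OF cut]] finite_branches by simp
  moreover have "card (V - S) = card V - card S"
    using card_Diff_subset[OF finite_subset[OF \<open>S \<subseteq> V\<close> finite_V] \<open>S \<subseteq> V\<close>] .
  ultimately show ?thesis
    using card_Un_branches by linarith
qed

lemma card_complement: "card (V - (C1 \<union> C2)) = card V - 2 * g - 2"
proof -
  have "C1 \<union> C2 \<subseteq> V" using branches_subset by blast
  then show ?thesis
    using card_Diff_subset[OF finite_subset[OF _ finite_V]] card_Un_branches by simp
qed

end

theorem lemma4p1: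
  fixes V :: "'a set" and E :: "'a set set" and n g :: nat
  assumes "tree V E"
    and "card V = n"
    and "1 \<le> g"
    and "int g \<le> (int n - 3) div 2"
    and "type_Tstar g V E"
  shows "(\<exists>S. Rg_cutset g V E S) \<and> extra_conn g V E = n - 2 * g - 2"
proof -
  obtain v C1 C2 where "v \<in> V"
    and "C1 \<in> components (V - {v}) {e \<in> E. e \<inter> {v} = {}}"
    and "C2 \<in> components (V - {v}) {e \<in> E. e \<inter> {v} = {}}" and "C1 \<noteq> C2"
    and "card C1 = g + 1" and "card C2 = g + 1"
    and "\<forall>C \<in> components (V - {v}) {e \<in> E. e \<inter> {v} = {}} - {C1, C2}. card C \<le> g"
    using assms(5) unfolding type_Tstar_def del_verts_def Let_def prod.case by blast
  moreover have "components (V - {v}) {e \<in> E. e \<inter> {v} = {}} = components (V - {v}) E"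
    by (rule components_del_verts) blast
  moreover have "finite V" and "connected V E"
    using assms(1) by (simp_all add: tree_def graph_def)
  ultimately interpret heavy_branches g V E v C1 C2
    by unfold_locales auto
  have "extra_conn g V E = n - 2 * g - 2"
    unfolding extra_conn_def
  proof (rule Least_equality)
    show "\<exists>S. Rg_cutset g V E S \<and> card S = n - 2 * g - 2"
      using Rg_cutset_complement card_complement assms(2) by blast
  next
    fix k assume "\<exists>S. Rg_cutset g V E S \<and> card S = k"
    then show "n - 2 * g - 2 \<le> k"
      using card_Rg_cutset assms(2) by blast
  qed
  then show ?thesis
    using Rg_cutset_complement by blast
qed

end
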